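(* Let $\mathbf{S}=\langle S;\to,\neg,{}^+,{}^-,1\rangle$ be a strong quasi-Wajsberg* algebra. For $x,y\in S$ define $0:=x\to x$, $x\oplus y:=\neg x\to y$ and $-x:=\neg x$. Then $g(\mathbf{S})=\langle S;\oplus,-,{}^+,{}^-,0,1\rangle$ is a strong quasi-MV* algebra (with $x\vee y:=(x^{+}\oplus(-x^{+}\oplus y^{+})^{+})\oplus(x^{-}\oplus(-x^{-}\oplus y^{-})^{+})$).
   Context: A quasi-Wajsberg* algebra is an algebra $\langle W;\to,\neg,{}^+,{}^-,1\rangle$ of type $\langle 2,1,1,1,0\rangle$ (${}^+,{}^-$ bind more tightly than $\neg$, which binds more tightly than $\to$) such that for all $x,y,z$: (1) $x\to y=\neg y\to\neg x$; (2) $(x\to 1)\to((y\to 1)\to z)=(y\to 1)\to((x\to 1)\to z)$; (3) $(1\to x)\to 1=1$; (4) $(z\to z)\to(x\to y)=x\to y$; (5) $(1\to 1)\to x^{+}=((1\to 1)\to x)^{+}=(x\to 1)\to 1$ and $(1\to 1)\to x^{-}=((1\to 1)\to x)^{-}=(x\to\neg 1)\to\neg 1$; (6) $x\to y=(y^{+}\to x^{-})\to(x^{+}\to y^{-})$; (7) $\neg(x\to y)=y\to x$; (8) $\neg\neg x=x$; (9) $(x\to(\neg x\to y))^{+}=x^{+}\to(\neg x^{+}\to y^{+})$; (10) $x\vee y=y\vee x$; (11) $x\vee(y\vee z)=(x\vee y)\vee z$; (12) $x\to(y\vee z)=(x\to y)\vee(x\to z)$; where $x\vee y:=((x^{+}\to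 y^{+})^{+}\to(\neg x)^{-})\to((y^{-}\to x^{-})^{-}\to x^{-})$. In a quasi-Wajsberg* algebra $x\to x$ does not depend on $x$. A strong quasi-Wajsberg* algebra is a quasi-Wajsberg* algebra satisfying $x^+=(1\to 1)\to x^+$ and $x^-=(1\to 1)\to x^-$. A quasi-MV* algebra is an algebra $\langle A;\oplus,-,{}^{+},{}^{-},0,1\rangle$ of type $\langle 2,1,1,1,0,0\rangle$ ($-1$ denotes $-(1)$) such that for all $x,y,z$: $x\oplus y=y\oplus x$; $(1\oplus x)\oplus(y\oplus(1\oplus z))=((1\oplus x)\oplus y)\oplus(1\oplus z)$; $(x\oplus 1)\oplus 1=1$; $(x\oplus y)\oplus 0=x\oplus y$; $x^{+}\oplus 0=(x\oplus 0)^{+}=1\oplus(-1\oplus x)$ and $x^{-}\oplus 0=(x\oplus 0)^{-}=-1\oplus(1\oplus x)$; $x\oplus y=(x^{+}\oplus y^{+})\oplus(x^{-}\oplus y^{-})$; $0=-0$; $x\oplus(-x)=0$; $-(x\oplus y)=(-x)\oplus(-y)$; $-(-x)=x$; $(-x\oplus(x\oplus y))^{+}=-x^{+}\oplus(x^{+}\oplus y^{+})$; $x\vee y=y\vee x$; $x\vee(y\vee z)=(x\vee y)\vee z$; $x\oplus(y\vee z)=(x\oplus y)\vee(x\oplus z)$, with $\vee$ as in the claim. A strong quasi-MV* algebra is a quasi-MV* algebra satisfying $x^+=x^+\oplus 0$ and $x^-=x^-\oplus 0$. *)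

theory Defs
  imports Main
begin

text \<open>Algebras are given by their operations on the whole type 'a (the carrier).
  Quasi-Wajsberg* signature: imp (binary arrow), neg (negation), pl (x^+), mi (x^-), one (1).\<close>

definition qW_join :: "('a \<Rightarrow> 'a \<Rightarrow> 'a) \<Rightarrow> ('a \<Rightarrow> 'a) \<Rightarrow> ('a \<Rightarrow> 'a) \<Rightarrow> ('a \<Rightarrow> 'a) \<Rightarrow> 'a \<Rightarrow> 'a \<Rightarrow> 'a" where
  "qW_join imp neg pl mi x y =
     imp (imp (pl (imp (pl x) (pl y))) (mi (neg x)))
         (imp (mi (imp (mi y) (mi x))) (mi x))"

definition quasi_Wajsberg_star ::
  "('a \<Rightarrow> 'a \<Rightarrow> 'a) \<Rightarrow> ('a \<Rightarrow> 'a) \<Rightarrow> ('a \<Rightarrow> 'a) \<Rightarrow> ('a \<Rightarrow> 'a) \<Rightarrow> 'a \<Rightarrow> bool" where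
  "quasi_Wajsberg_star imp neg pl mi one \<longleftrightarrow>
    (\<forall>x y. imp x y = imp (neg y) (neg x)) \<and>
    (\<forall>x y z. imp (imp x one) (imp (imp y one) z) = imp (imp y one) (imp (imp x one) z)) \<and>
    (\<forall>x. imp (imp one x) one = one) \<and>
    (\<forall>x y z. imp (imp z z) (imp x y) = imp x y) \<and>
    (\<forall>x. imp (imp one one) (pl x) = pl (imp (imp one one) x) \<and>
         pl (imp (imp one one) x) = imp (imp x one) one) \<and>
    (\<forall>x. imp (imp one one) (mi x) = mi (imp (imp one one) x) \<and>
         mi (imp (imp one one) x) = imp (imp x (neg one)) (neg one)) \<and>
    (\<forall>x y. imp x y = imp (imp (pl y) (mi x)) (imp (pl x) (mi y))) \<and>
    (\<forall>x y. neg (imp x y) = imp y x) \<and>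
    (\<forall>x. neg (neg x) = x) \<and>
    (\<forall>x y. pl (imp x (imp (neg x) y)) = imp (pl x) (imp (neg (pl x)) (pl y))) \<and>
    (\<forall>x y. qW_join imp neg pl mi x y = qW_join imp neg pl mi y x) \<and>
    (\<forall>x y z. qW_join imp neg pl mi x (qW_join imp neg pl mi y z) =
             qW_join imp neg pl mi (qW_join imp neg pl mi x y) z) \<and>
    (\<forall>x y z. imp x (qW_join imp neg pl mi y z) =
             qW_join imp neg pl mi (imp x y) (imp x z))"

definition strong_quasi_Wajsberg_star ::
  "('a \<Rightarrow> 'a \<Rightarrow> 'a) \<Rightarrow> ('a \<Rightarrow> 'a) \<Rightarrow> ('a \<Rightarrow> 'a) \<Rightarrow> ('a \<Rightarrow> 'a) \<Rightarrow> 'a \<Rightarrow> bool" where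
  "strong_quasi_Wajsberg_star imp neg pl mi one \<longleftrightarrow>
    quasi_Wajsberg_star imp neg pl mi one \<and>
    (\<forall>x. pl x = imp (imp one one) (pl x)) \<and>
    (\<forall>x. mi x = imp (imp one one) (mi x))"

definition qMV_join :: "('a \<Rightarrow> 'a \<Rightarrow> 'a) \<Rightarrow> ('a \<Rightarrow> 'a) \<Rightarrow> ('a \<Rightarrow> 'a) \<Rightarrow> ('a \<Rightarrow> 'a) \<Rightarrow> 'a \<Rightarrow> 'a \<Rightarrow> 'a" where
  "qMV_join opl mn pl mi x y =
     opl (opl (pl x) (pl (opl (mn (pl x)) (pl y))))
         (opl (mi x) (pl (opl (mn (mi x)) (mi y))))"

definition quasi_MV_star ::
  "('a \<Rightarrow> 'a \<Rightarrow> 'a) \<Rightarrow> ('a \<Rightarrow> 'a) \<Rightarrow> ('a \<Rightarrow> 'a) \<Rightarrow> ('a \<Rightarrow> 'a) \<Rightarrow> 'a \<Rightarrow> 'a \<Rightarrow> bool" where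
  "quasi_MV_star opl mn pl mi zero one \<longleftrightarrow>
    (\<forall>x y. opl x y = opl y x) \<and>
    (\<forall>x y z. opl (opl one x) (opl y (opl one z)) = opl (opl (opl one x) y) (opl one z)) \<and>
    (\<forall>x. opl (opl x one) one = one) \<and>
    (\<forall>x y. opl (opl x y) zero = opl x y) \<and>
    (\<forall>x. opl (pl x) zero = pl (opl x zero) \<and> pl (opl x zero) = opl one (opl (mn one) x)) \<and>
    (\<forall>x. opl (mi x) zero = mi (opl x zero) \<and> mi (opl x zero) = opl (mn one) (opl one x)) \<and>
    (\<forall>x y. opl x y = opl (opl (pl x) (pl y)) (opl (mi x) (mi y))) \<and>
    zero = mn zero \<and>
    (\<forall>x. opl x (mn x) = zero) \<and>
    (\<forall>x y. mn (opl x y) = opl (mn x) (mn y)) \<and>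
    (\<forall>x. mn (mn x) = x) \<and>
    (\<forall>x y. pl (opl (mn x) (opl x y)) = opl (mn (pl x)) (opl (pl x) (pl y))) \<and>
    (\<forall>x y. qMV_join opl mn pl mi x y = qMV_join opl mn pl mi y x) \<and>
    (\<forall>x y z. qMV_join opl mn pl mi x (qMV_join opl mn pl mi y z) =
             qMV_join opl mn pl mi (qMV_join opl mn pl mi x y) z) \<and>
    (\<forall>x y z. opl x (qMV_join opl mn pl mi y z) =
             qMV_join opl mn pl mi (opl x y) (opl x z))"

definition strong_quasi_MV_star ::
  "('a \<Rightarrow> 'a \<Rightarrow> 'a) \<Rightarrow> ('a \<Rightarrow> 'a) \<Rightarrow> ('a \<Rightarrow> 'a) \<Rightarrow> ('a \<Rightarrow> 'a) \<Rightarrow> 'a \<Rightarrow> 'a \<Rightarrow> bool" where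
  "strong_quasi_MV_star opl mn pl mi zero one \<longleftrightarrow>
    quasi_MV_star opl mn pl mi zero one \<and>
    (\<forall>x. pl x = opl (pl x) zero) \<and>
    (\<forall>x. mi x = opl (mi x) zero)"

end

theory Submission
  imports Defs
begin

text \<open>Under the translation x \<oplus> y = \<not>x \<rightarrow> y every quasi-MV* axiom becomes a
  quasi-Wajsberg* axiom once negations are moved around with contraposition,
  \<not>(x \<rightarrow> y) = y \<rightarrow> x and \<not>\<not>x = x; the constant 0 = x \<rightarrow> x is 1 \<rightarrow> 1.
  Strongness makes 0 a left unit on the values of pl and mi. Besides giving the
  strong quasi-MV* axioms, this yields pl x = (x \<rightarrow> 1) \<rightarrow> 1 and
  mi x = (x \<rightarrow> \<not>1) \<rightarrow> \<not>1, hence \<not>(pl x) = mi (\<not>x); that exchange identifies the two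
  joins and turns the decomposition of x \<rightarrow> y through pl and mi into that of x \<oplus> y.\<close>

locale quasi_Wajsberg =
  fixes imp :: "'a \<Rightarrow> 'a \<Rightarrow> 'a" and neg pl mi :: "'a \<Rightarrow> 'a" and one :: 'a
  assumes imp_contrapose: "imp x y = imp (neg y) (neg x)"
    and imp_one_exchange: "imp (imp x one) (imp (imp y one) z) = imp (imp y one) (imp (imp x one) z)"
    and one_imp_imp_one: "imp (imp one x) one = one"
    and imp_self_imp: "imp (imp z z) (imp x y) = imp x y"
    and imp_unit_pl: "imp (imp one one) (pl x) = pl (imp (imp one one) x)"
    and pl_imp_unit: "pl (imp (imp one one) x) = imp (imp x one) one"
    and imp_unit_mi: "imp (imp one one) (mi x) = mi (imp (imp one one) x)"
    and mi_imp_unit: "mi (imp (imp one one) x) = imp (imp x (neg one)) (neg one)"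
    and imp_pl_mi: "imp x y = imp (imp (pl y) (mi x)) (imp (pl x) (mi y))"
    and neg_imp: "neg (imp x y) = imp y x"
    and neg_neg: "neg (neg x) = x"
    and pl_imp_neg_imp: "pl (imp x (imp (neg x) y)) = imp (pl x) (imp (neg (pl x)) (pl y))"
    and qW_join_commute: "qW_join imp neg pl mi x y = qW_join imp neg pl mi y x"
    and qW_join_assoc: "qW_join imp neg pl mi x (qW_join imp neg pl mi y z) =
                        qW_join imp neg pl mi (qW_join imp neg pl mi x y) z"
    and imp_qW_join_distrib: "imp x (qW_join imp neg pl mi y z) =
                              qW_join imp neg pl mi (imp x y) (imp x z)"

lemma quasi_Wajsberg_star_iff:
  "quasi_Wajsberg_star imp neg pl mi one \<longleftrightarrow> quasi_Wajsberg imp neg pl mi one"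
  unfolding quasi_Wajsberg_star_def quasi_Wajsberg_def by (auto simp: all_conj_distrib)

context quasi_Wajsberg
begin

abbreviation oplus :: "'a \<Rightarrow> 'a \<Rightarrow> 'a" where
  "oplus x y \<equiv> imp (neg x) y"

abbreviation zero :: 'a where
  "zero \<equiv> imp one one"

lemma imp_self_eq: "imp x x = imp y y"
proof -
  have "imp x x = imp (imp y y) (imp x x)"
    by (rule imp_self_imp[symmetric])
  also have "\<dots> = neg (imp (imp x x) (imp y y))"
    by (rule neg_imp[symmetric])
  also have "\<dots> = neg (imp y y)"
    by (simp only: imp_self_imp)
  also have "\<dots> = imp y y"
    by (rule neg_imp)
  finally show ?thesis .
qed

lemma neg_zero: "neg zero = zero"
  by (rule neg_imp)

lemma imp_zero_right: "imp x zero = imp zero (neg x)"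
  by (metis imp_contrapose neg_zero)

lemma oplus_commute: "oplus x y = oplus y x"
  by (metis imp_contrapose neg_neg)

lemma imp_one_left_exchange:
  "imp (imp one x) (imp (imp one y) z) = imp (imp one y) (imp (imp one x) z)"
proof -
  have flip: "imp (imp one p) (imp (imp one q) z) = imp (imp (imp q one) (neg z)) (imp p one)" for p q
    by (metis imp_contrapose neg_imp neg_neg)
  show ?thesis
    using imp_one_exchange[of x y "neg z"] by (metis flip neg_imp)
qed

lemma oplus_one_assoc:
  "oplus (oplus one x) (oplus y (oplus one z)) = oplus (oplus (oplus one x) y) (oplus one z)"
proof -
  have "oplus (oplus one x) (oplus y (oplus one z)) = imp (imp one (neg x)) (imp (imp one (neg z)) y)"
    by (metis imp_contrapose neg_imp neg_neg)
  moreover have "oplus (oplus (oplus one x) y) (oplus one z) = imp (imp one (neg z)) (imp (imp one (neg x)) y)"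
    by (metis imp_contrapose neg_imp neg_neg)
  ultimately show ?thesis
    by (simp only: imp_one_left_exchange)
qed

lemma oplus_one_absorb: "oplus (oplus x one) one = one"
  by (simp add: neg_imp one_imp_imp_one)

lemma oplus_oplus_zero: "oplus (oplus x y) zero = oplus x y"
  by (simp add: imp_zero_right neg_neg imp_self_imp)

lemma oplus_zero_eq: "oplus x zero = imp zero x"
  by (simp add: imp_zero_right neg_neg)

lemma one_oplus_neg_one_oplus: "oplus one (oplus (neg one) x) = imp (imp x one) one"
  by (metis imp_contrapose neg_imp neg_neg)

lemma neg_one_oplus_one_oplus: "oplus (neg one) (oplus one x) = imp (imp x (neg one)) (neg one)"
  by (metis imp_contrapose neg_imp neg_neg)

lemma pl_oplus_zero:
  "oplus (pl x) zero = pl (oplus x zero)" "pl (oplus x zero) = oplus one (oplus (neg one) x)"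
  by (simp_all only: oplus_zero_eq imp_unit_pl pl_imp_unit one_oplus_neg_one_oplus)

lemma mi_oplus_zero:
  "oplus (mi x) zero = mi (oplus x zero)" "mi (oplus x zero) = oplus (neg one) (oplus one x)"
  by (simp_all only: oplus_zero_eq imp_unit_mi mi_imp_unit neg_one_oplus_one_oplus)

lemma oplus_neg_self: "oplus x (neg x) = zero"
  by (rule imp_self_eq)

lemma neg_oplus: "neg (oplus x y) = oplus (neg x) (neg y)"
  by (metis imp_contrapose neg_imp neg_neg)

lemma pl_neg_oplus_oplus:
  "pl (oplus (neg x) (oplus x y)) = oplus (neg (pl x)) (oplus (pl x) (pl y))"
  by (simp add: neg_neg pl_imp_neg_imp)

end

locale strong_quasi_Wajsberg = quasi_Wajsberg +
  assumes imp_unit_pl_eq: "imp (imp one one) (pl x) = pl x"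
    and imp_unit_mi_eq: "imp (imp one one) (mi x) = mi x"

lemma strong_quasi_Wajsberg_star_iff:
  "strong_quasi_Wajsberg_star imp neg pl mi one \<longleftrightarrow> strong_quasi_Wajsberg imp neg pl mi one"
  unfolding strong_quasi_Wajsberg_star_def strong_quasi_Wajsberg_def
    strong_quasi_Wajsberg_axioms_def quasi_Wajsberg_star_iff
  by auto

context strong_quasi_Wajsberg
begin

lemma pl_oplus_zero_eq: "oplus (pl x) zero = pl x"
  by (simp add: oplus_zero_eq imp_unit_pl_eq)

lemma mi_oplus_zero_eq: "oplus (mi x) zero = mi x"
  by (simp add: oplus_zero_eq imp_unit_mi_eq)

lemma pl_eq: "pl x = imp (imp x one) one"
  using pl_imp_unit imp_unit_pl imp_unit_pl_eq by metis

lemma mi_eq: "mi x = imp (imp x (neg one)) (neg one)"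
  using mi_imp_unit imp_unit_mi imp_unit_mi_eq by metis

lemma neg_pl: "neg (pl x) = mi (neg x)"
  unfolding pl_eq mi_eq by (metis imp_contrapose neg_imp)

lemma neg_mi: "neg (mi x) = pl (neg x)"
  by (metis neg_pl neg_neg)

lemma oplus_pl_mi: "oplus x y = oplus (oplus (pl x) (pl y)) (oplus (mi x) (mi y))"
  using imp_pl_mi[of "neg x" y] by (simp add: neg_pl neg_mi neg_imp)

lemma qMV_join_eq_qW_join: "qMV_join oplus neg pl mi x y = qW_join imp neg pl mi x y"
  unfolding qMV_join_def qW_join_def
  by (metis imp_contrapose neg_imp neg_neg neg_pl)

lemma strong_quasi_MV_star_induced: "strong_quasi_MV_star oplus neg pl mi zero one"
  unfolding strong_quasi_MV_star_def quasi_MV_star_def qMV_join_eq_qW_join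
  by (intro conjI allI;
      rule oplus_commute oplus_one_assoc oplus_one_absorb oplus_oplus_zero pl_oplus_zero
        mi_oplus_zero oplus_pl_mi neg_zero[symmetric] oplus_neg_self neg_oplus neg_neg
        pl_neg_oplus_oplus qW_join_commute qW_join_assoc imp_qW_join_distrib
        pl_oplus_zero_eq[symmetric] mi_oplus_zero_eq[symmetric])

end

theorem proposition3p5:
  fixes imp :: "'a \<Rightarrow> 'a \<Rightarrow> 'a" and neg pl mi :: "'a \<Rightarrow> 'a" and one :: 'a and u :: 'a
  assumes "strong_quasi_Wajsberg_star imp neg pl mi one"
  shows "strong_quasi_MV_star (\<lambda>x y. imp (neg x) y) neg pl mi (imp u u) one"
proof -
  interpret strong_quasi_Wajsberg imp neg pl mi one
    using assms by (simp add: strong_quasi_Wajsberg_star_iff)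
  have "imp u u = imp one one"
    by (rule imp_self_eq)
  then show ?thesis
    using strong_quasi_MV_star_induced by simp
qed

end
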